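(* Let $\{M^x\}_{x>0}$ be a family of non-quasianalytic weight sequences such that $\mu^x\lesssim\mu^y$ whenever $x\le y$, and $$\forall x>0\ \exists y>0\ \exists C>0\ \forall k\ge1:\ \sum_{\ell\ge k}\frac1{\mu^y_\ell}\le C\frac{k}{\mu^x_k}.$$ Then there exists a family $\{S^x\}_{x>0}$ of non-quasianalytic weight sequences such that: (1) for each $x>0$, $\sigma^x_k/k\ge1$ and $k\mapsto\sigma^x_k/k$ is increasing to $\infty$; (2) $\sigma^x\lesssim\sigma^y$ whenever $x\le y$; (3) $\forall x>0\ \exists y>0\ \exists C>0\ \forall k\ge1:\ \sum_{\ell\ge k}\frac1{\sigma^y_\ell}\le C\frac{k}{\sigma^x_k}$; (4) $\forall x>0\ \exists y>0:\ \sigma^x\lesssim\mu^y$, and $\forall x>0\ \exists y>0:\ \mu^x\lesssim\sigma^y$.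
   Context: A weight sequence is given by an increasing sequence $1=\mu_0\le\mu_1\le\cdots$ via $M_k=\mu_0\cdots\mu_k$, with $M_k^{1/k}\to\infty$; it is non-quasianalytic if $\sum_k1/\mu_k<\infty$. Similarly $\sigma^x\leftrightarrow S^x$ and $\mu^x\leftrightarrow M^x$. For sequences, $a\lesssim b$ means $a_k\le Cb_k$ for all $k$ with a constant $C>0$. *)

theory Defs
  imports "HOL-Analysis.Analysis"
begin

text \<open>A weight sequence, given via its quotient sequence mu:
  1 = mu 0 <= mu 1 <= ..., with M k = mu 0 * ... * mu k and (M k)^(1/k) tending to infinity.\<close>

definition weight_M :: "(nat \<Rightarrow> real) \<Rightarrow> nat \<Rightarrow> real" where
  "weight_M mu k = (\<Prod>j\<le>k. mu j)"

definition weight_seq :: "(nat \<Rightarrow> real) \<Rightarrow> bool" where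
  "weight_seq mu \<longleftrightarrow> mu 0 = 1 \<and> mono mu \<and>
     filterlim (\<lambda>k. weight_M mu k powr (1 / real k)) at_top sequentially"

definition nonquasianalytic :: "(nat \<Rightarrow> real) \<Rightarrow> bool" where
  "nonquasianalytic mu \<longleftrightarrow> summable (\<lambda>k. 1 / mu k)"

definition nq_weight_seq :: "(nat \<Rightarrow> real) \<Rightarrow> bool" where
  "nq_weight_seq mu \<longleftrightarrow> weight_seq mu \<and> nonquasianalytic mu"

definition seq_lesssim :: "(nat \<Rightarrow> real) \<Rightarrow> (nat \<Rightarrow> real) \<Rightarrow> bool" where
  "seq_lesssim a b \<longleftrightarrow> (\<exists>C>0. \<forall>k. a k \<le> C * b k)"

definition tail_sum :: "(nat \<Rightarrow> real) \<Rightarrow> nat \<Rightarrow> real" where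
  "tail_sum mu k = (\<Sum>l. 1 / mu (l + k))"

end

theory Submission
  imports Defs
begin

text \<open>Replace a weight sequence h by its regularization sigma[h] k = k * max 1 (inf_{l \<ge> k} h l / l),
  whose quotients sigma k / k increase. Always sigma[h] \<lesssim> h, because k \<le> (\<Sum>l. 1 / h l) * h k.
  Conversely, if the tails of h are bounded by C k / f k, comparing the tail sum between k and l
  gives f k / k \<lesssim> h l / l for all l \<ge> k, hence f \<lesssim> sigma[h]. So sigma x := sigma[mu (g x)],
  for an increasing choice g x of tail indices, is squeezed between mu x and mu (g x), and every
  required property transfers from the family mu.\<close>

lemma nq_weight_seq_ge_1:
  assumes "nq_weight_seq f"
  shows "1 \<le> f l"
  using assms unfolding nq_weight_seq_def weight_seq_def mono_def by (metis le0)

lemma nq_weight_seq_pos: "nq_weight_seq f \<Longrightarrow> 0 < f l"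
  using nq_weight_seq_ge_1[of f l] by simp

lemma nq_weight_seq_mono: "nq_weight_seq f \<Longrightarrow> l \<le> l' \<Longrightarrow> f l \<le> f l'"
  unfolding nq_weight_seq_def weight_seq_def mono_def by auto

lemma nq_weight_seq_summable: "nq_weight_seq f \<Longrightarrow> summable (\<lambda>l. 1 / f l)"
  unfolding nq_weight_seq_def nonquasianalytic_def by simp

lemma nq_weight_seq_linear_bound:
  assumes "nq_weight_seq f"
  shows "real k \<le> (\<Sum>l. 1 / f l) * f k"
proof -
  have "real k / f k = (\<Sum>j<k. 1 / f k)" by simp
  also have "\<dots> \<le> (\<Sum>j<k. 1 / f j)"
    by (intro sum_mono divide_left_mono)
      (auto intro: nq_weight_seq_mono[OF assms] nq_weight_seq_pos[OF assms] mult_pos_pos)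
  also have "\<dots> \<le> (\<Sum>l. 1 / f l)"
    by (intro sum_le_suminf nq_weight_seq_summable[OF assms])
      (auto intro: less_imp_le nq_weight_seq_pos[OF assms])
  finally show ?thesis using nq_weight_seq_pos[OF assms, of k] by (simp add: divide_le_eq)
qed

lemma tail_sum_ge:
  assumes "nq_weight_seq f" "k \<le> l"
  shows "real (l - k + 1) / f l \<le> tail_sum f k"
proof -
  have "real (l - k + 1) / f l = (\<Sum>i<l-k+1. 1 / f l)" by simp
  also have "\<dots> \<le> (\<Sum>i<l-k+1. 1 / f (i + k))"
    by (intro sum_mono divide_left_mono)
      (use assms in \<open>auto intro!: nq_weight_seq_mono[OF assms(1)] nq_weight_seq_pos[OF assms(1)] mult_pos_pos\<close>)
  also have "\<dots> \<le> tail_sum f k"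
    unfolding tail_sum_def
    using summable_iff_shift[of "\<lambda>l. 1 / f l" k] nq_weight_seq_summable[OF assms(1)]
    by (intro sum_le_suminf) (auto intro: less_imp_le nq_weight_seq_pos[OF assms(1)])
  finally show ?thesis .
qed

lemma pos_of_le_pos_mult: "0 < a \<Longrightarrow> a \<le> C * b \<Longrightarrow> 0 < C \<Longrightarrow> 0 < (b::real)"
  by (meson less_le_trans zero_less_mult_pos)

lemma tail_sum_le_scaled:
  assumes "summable (\<lambda>l. 1 / f l)" "summable (\<lambda>l. 1 / h l)"
    and "\<And>l. 0 < f l" "\<And>l. f l \<le> A * h l" "0 < A"
  shows "tail_sum h k \<le> A * tail_sum f k"
proof -
  have shifted: "summable (\<lambda>l. 1 / f (l + k))" "summable (\<lambda>l. 1 / h (l + k))"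
    using assms(1,2) summable_iff_shift[of "\<lambda>l. 1 / f l" k] summable_iff_shift[of "\<lambda>l. 1 / h l" k]
    by auto
  have "1 / h l \<le> A * (1 / f l)" for l
  proof -
    have "0 < h l" using assms(3)[of l] assms(4)[of l] assms(5) by (rule pos_of_le_pos_mult)
    thus ?thesis using assms(3)[of l] assms(4)[of l] assms(5) by (simp add: field_simps)
  qed
  hence "tail_sum h k \<le> (\<Sum>l. A * (1 / f (l + k)))"
    unfolding tail_sum_def using shifted by (intro suminf_le summable_mult) auto
  also have "\<dots> = A * tail_sum f k"
    unfolding tail_sum_def using shifted(1) by (rule suminf_mult)
  finally show ?thesis .
qed

text \<open>Olivier's theorem for the decreasing summable sequence 1 / f: k / f k is at most twice the
  tail sum from k div 2 onwards.\<close>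
lemma nq_weight_seq_quotient_at_top:
  assumes "nq_weight_seq f"
  shows "filterlim (\<lambda>l. f l / real l) at_top sequentially"
proof -
  have "(\<lambda>l. real l / f l) \<longlonglongrightarrow> 0"
  proof (rule LIMSEQ_I)
    fix r :: real assume r: "r > 0"
    obtain N where N: "\<forall>n\<ge>N. norm (\<Sum>i. 1 / f (i + n)) < r/2"
      using suminf_exist_split[of "r/2", OF _ nq_weight_seq_summable[OF assms]] r by auto
    show "\<exists>no. \<forall>n\<ge>no. norm (real n / f n - 0) < r"
    proof (intro exI allI impI)
      fix n assume n: "2*N \<le> n"
      have "real n / f n \<le> 2 * (real (n - n div 2 + 1) / f n)"
        using nq_weight_seq_pos[OF assms, of n] by (simp add: field_simps)
      also have "\<dots> \<le> 2 * tail_sum f (n div 2)"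
        using tail_sum_ge[OF assms, of "n div 2" n] by (intro mult_left_mono) auto
      also have "\<dots> < r"
      proof -
        have "N \<le> n div 2" using n by linarith
        thus ?thesis using N unfolding tail_sum_def by fastforce
      qed
      finally show "norm (real n / f n - 0) < r"
        using nq_weight_seq_pos[OF assms, of n] by simp
    qed
  qed
  hence "filterlim (\<lambda>l. inverse (real l / f l)) at_top sequentially"
    by (rule filterlim_inverse_at_top)
       (use nq_weight_seq_pos[OF assms] in \<open>auto simp: eventually_sequentially intro!: exI[of _ 1]\<close>)
  thus ?thesis by simp
qed

lemma weight_seq_of_at_top:
  assumes f0: "f 0 = 1" and mono: "mono f" and lim: "filterlim f at_top sequentially"
  shows "weight_seq f"
  unfolding weight_seq_def
proof (intro conjI f0 mono)
  show "filterlim (\<lambda>k. weight_M f k powr (1 / real k)) at_top sequentially"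
    unfolding filterlim_at_top_ge[where c=1]
  proof (intro allI impI)
    fix Z :: real assume Z: "Z \<ge> 1"
    have f1: "f j \<ge> 1" for j using mono f0 by (metis le0 monoD)
    obtain N where N: "\<And>j. j \<ge> N \<Longrightarrow> f j \<ge> Z^2"
      using lim unfolding filterlim_at_top eventually_sequentially by blast
    show "eventually (\<lambda>k. Z \<le> weight_M f k powr (1 / real k)) sequentially"
      unfolding eventually_sequentially
    proof (intro exI[of _ "2*N+1"] allI impI)
      fix k assume k: "2*N+1 \<le> k"
      have "{..k} \<inter> {j. N \<le> j} = {N..k}" by auto
      hence "(Z^2) ^ (k + 1 - N) = (\<Prod>j\<le>k. (if N \<le> j then Z^2 else 1))"
        by (simp add: prod.If_cases)
      also have "\<dots> \<le> weight_M f k"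
        unfolding weight_M_def by (rule prod_mono) (use Z f1 N in auto)
      finally have "Z ^ (2 * (k + 1 - N)) \<le> weight_M f k" by (simp add: power_mult)
      moreover have "Z ^ k \<le> Z ^ (2 * (k + 1 - N))" using Z k by (intro power_increasing) auto
      ultimately have "(Z ^ k) powr (1 / real k) \<le> weight_M f k powr (1 / real k)"
        using Z by (intro powr_mono2) auto
      moreover have "(Z ^ k) powr (1 / real k) = Z"
        using Z k by (simp add: powr_realpow[symmetric] powr_powr)
      ultimately show "Z \<le> weight_M f k powr (1 / real k)" by simp
    qed
  qed
qed

lemma nonquasianalytic_lesssim:
  assumes "seq_lesssim f g" "nonquasianalytic f" "\<And>k. 0 < f k"
  shows "nonquasianalytic g"
proof -
  obtain C where C: "0 < C" "\<And>k. f k \<le> C * g k"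
    using assms(1) unfolding seq_lesssim_def by blast
  have bound: "norm (1 / g k) \<le> C * (1 / f k)" for k
  proof -
    have "0 < g k" using assms(3)[of k] C(2)[of k] C(1) by (rule pos_of_le_pos_mult)
    thus ?thesis using C assms(3)[of k] by (simp add: field_simps)
  qed
  have "summable (\<lambda>k. C * (1 / f k))"
    using assms(2) unfolding nonquasianalytic_def by (rule summable_mult)
  thus ?thesis
    unfolding nonquasianalytic_def by (rule summable_comparison_test'[where N=0]) (rule bound)
qed

lemma quotient_at_top_lesssim:
  assumes "seq_lesssim f g" "filterlim (\<lambda>k. f k / real k) at_top sequentially"
  shows "filterlim (\<lambda>k. g k / real k) at_top sequentially"
proof -
  obtain C where C: "0 < C" "\<And>k. f k \<le> C * g k"
    using assms(1) unfolding seq_lesssim_def by blast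
  have lim: "filterlim (\<lambda>k. (1 / C) * (f k / real k)) at_top sequentially"
    by (rule filterlim_tendsto_pos_mult_at_top[OF tendsto_const _ assms(2)]) (use C in simp)
  have "\<forall>k. (1 / C) * (f k / real k) \<le> g k / real k"
  proof
    fix k
    have "f k / C \<le> g k" using C(1) C(2)[of k] by (simp add: divide_le_eq mult.commute)
    thus "(1 / C) * (f k / real k) \<le> g k / real k"
      using divide_right_mono[of "f k / C" "g k" "real k"] by simp
  qed
  thus ?thesis by (rule filterlim_at_top_mono[OF lim always_eventually])
qed

definition tail_bounded :: "(nat \<Rightarrow> real) \<Rightarrow> (nat \<Rightarrow> real) \<Rightarrow> bool" where
  "tail_bounded h f \<longleftrightarrow> (\<exists>C>0. \<forall>k\<ge>1. tail_sum h k \<le> C * (real k / f k))"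

lemma tail_bounded_lesssim_left:
  assumes "tail_bounded h f" "seq_lesssim h h'" "nq_weight_seq h" "nq_weight_seq h'"
  shows "tail_bounded h' f"
proof -
  obtain C where C: "0 < C" "\<And>k. k \<ge> 1 \<Longrightarrow> tail_sum h k \<le> C * (real k / f k)"
    using assms(1) unfolding tail_bounded_def by blast
  obtain A where A: "0 < A" "\<And>l. h l \<le> A * h' l"
    using assms(2) unfolding seq_lesssim_def by blast
  have "tail_sum h' k \<le> (A * C) * (real k / f k)" if "k \<ge> 1" for k
  proof -
    have "tail_sum h' k \<le> A * tail_sum h k"
      by (rule tail_sum_le_scaled[OF nq_weight_seq_summable[OF assms(3)] nq_weight_seq_summable[OF assms(4)]
            nq_weight_seq_pos[OF assms(3)] A(2) A(1)])
    also have "\<dots> \<le> A * (C * (real k / f k))" using A C that by (intro mult_left_mono) auto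
    finally show ?thesis by (simp add: mult.assoc)
  qed
  thus ?thesis unfolding tail_bounded_def using A C by (intro exI[of _ "A * C"]) auto
qed

lemma tail_bounded_lesssim_right:
  assumes "tail_bounded h f" "seq_lesssim f' f" "\<And>k. 0 < f' k"
  shows "tail_bounded h f'"
proof -
  obtain C where C: "0 < C" "\<And>k. k \<ge> 1 \<Longrightarrow> tail_sum h k \<le> C * (real k / f k)"
    using assms(1) unfolding tail_bounded_def by blast
  obtain A where A: "0 < A" "\<And>l. f' l \<le> A * f l"
    using assms(2) unfolding seq_lesssim_def by blast
  have "tail_sum h k \<le> (C * A) * (real k / f' k)" if "k \<ge> 1" for k
  proof -
    have "0 < f k" using assms(3)[of k] A(2)[of k] A(1) by (rule pos_of_le_pos_mult)
    moreover have "real k * f' k \<le> real k * (A * f k)" using A(2)[of k] by (intro mult_left_mono) auto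
    ultimately have "real k / f k \<le> A * (real k / f' k)"
      using assms(3)[of k] by (simp add: field_simps)
    hence "C * (real k / f k) \<le> C * (A * (real k / f' k))" using C by (intro mult_left_mono) auto
    thus ?thesis using C(2)[OF that] by (simp add: mult.assoc)
  qed
  thus ?thesis unfolding tail_bounded_def using A C by (intro exI[of _ "C * A"]) auto
qed

text \<open>The infimum over l \<ge> k of h l / l is the largest increasing minorant of h l / l.\<close>
definition quotient_envelope :: "(nat \<Rightarrow> real) \<Rightarrow> nat \<Rightarrow> real" where
  "quotient_envelope h k = (INF l\<in>{max 1 k..}. h l / real l)"

definition regularize :: "(nat \<Rightarrow> real) \<Rightarrow> nat \<Rightarrow> real" where
  "regularize h k = (if k = 0 then 1 else real k * max 1 (quotient_envelope h k))"

lemma quotient_envelope_le: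
  assumes "\<And>l. 0 < h l" "max 1 k \<le> l"
  shows "quotient_envelope h k \<le> h l / real l"
  unfolding quotient_envelope_def
proof (rule cINF_lower)
  show "bdd_below ((\<lambda>l. h l / real l) ` {max 1 k..})"
    using assms(1) by (intro bdd_belowI[of _ 0]) (auto simp: less_imp_le)
qed (use assms(2) in simp)

lemma quotient_envelope_greatest:
  "(\<And>l. max 1 k \<le> l \<Longrightarrow> c \<le> h l / real l) \<Longrightarrow> c \<le> quotient_envelope h k"
  unfolding quotient_envelope_def by (rule cINF_greatest) auto

lemma quotient_envelope_mono:
  "(\<And>l. 0 < h l) \<Longrightarrow> k \<le> k' \<Longrightarrow> quotient_envelope h k \<le> quotient_envelope h k'"
  by (rule quotient_envelope_greatest, rule quotient_envelope_le) auto

lemma quotient_envelope_nonneg: "(\<And>l. 0 < h l) \<Longrightarrow> 0 \<le> quotient_envelope h k"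
  by (rule quotient_envelope_greatest) (auto intro: less_imp_le)

lemma quotient_envelope_le_scaled:
  assumes "\<And>l. 0 < f l" "\<And>l. f l \<le> A * h l" "0 < A"
  shows "quotient_envelope f k \<le> A * quotient_envelope h k"
proof -
  have "quotient_envelope f k / A \<le> quotient_envelope h k"
  proof (rule quotient_envelope_greatest)
    fix l assume l: "max 1 k \<le> l"
    have "quotient_envelope f k \<le> f l / real l" by (rule quotient_envelope_le[OF assms(1) l])
    also have "\<dots> \<le> A * h l / real l" using assms(2)[of l] l by (simp add: divide_right_mono)
    finally show "quotient_envelope f k / A \<le> h l / real l" using assms(3) by (simp add: field_simps)
  qed
  thus ?thesis using assms(3) by (simp add: field_simps)
qed

lemma regularize_pos: "0 < regularize h k"
  unfolding regularize_def by auto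

lemma regularize_ge: "real k \<le> regularize h k"
  unfolding regularize_def by auto

lemma regularize_quotient: "k \<ge> 1 \<Longrightarrow> regularize h k / real k = max 1 (quotient_envelope h k)"
  unfolding regularize_def by auto

lemma regularize_quotient_ge_1: "1 \<le> k \<Longrightarrow> 1 \<le> regularize h k / real k"
  by (simp add: regularize_quotient)

lemma regularize_quotient_mono:
  assumes "\<And>l. 0 < h l" "1 \<le> k" "k \<le> l"
  shows "regularize h k / real k \<le> regularize h l / real l"
  using quotient_envelope_mono[of h, OF assms(1,3)] assms(2,3) by (simp add: regularize_quotient)

lemma regularize_mono:
  assumes "\<And>l. 0 < h l"
  shows "mono (regularize h)"
proof (rule monoI)
  fix k l :: nat assume kl: "k \<le> l"
  show "regularize h k \<le> regularize h l"
  proof (cases "k = 0")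
    case True
    show ?thesis
    proof (cases "l = 0")
      case False
      hence "1 \<le> real l" by simp
      also have "\<dots> \<le> regularize h l" by (rule regularize_ge)
      finally show ?thesis using True by (simp add: regularize_def)
    qed (simp add: True)
  next
    case False
    have "real k * max 1 (quotient_envelope h k) \<le> real l * max 1 (quotient_envelope h l)"
      using quotient_envelope_mono[of h, OF assms kl] kl by (intro mult_mono) auto
    thus ?thesis using False kl unfolding regularize_def by auto
  qed
qed

lemma regularize_nq_weight_seq:
  assumes "nq_weight_seq f" "seq_lesssim f (regularize h)" "\<And>l. 0 < h l"
  shows "nq_weight_seq (regularize h)"
  unfolding nq_weight_seq_def
proof
  have "filterlim (regularize h) at_top sequentially"
    by (rule filterlim_at_top_mono[OF filterlim_real_sequentially]) (simp add: regularize_ge)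
  thus "weight_seq (regularize h)"
    by (intro weight_seq_of_at_top[OF _ regularize_mono[OF assms(3)]]) (simp add: regularize_def)
  show "nonquasianalytic (regularize h)"
    using assms(1) unfolding nq_weight_seq_def
    by (intro nonquasianalytic_lesssim[OF assms(2)] nq_weight_seq_pos[OF assms(1)]) simp
qed

lemma regularize_lesssim_self:
  assumes "nq_weight_seq h"
  shows "seq_lesssim (regularize h) h"
proof -
  define S where "S = (\<Sum>l. 1 / h l)"
  have hpos: "\<And>l. 0 < h l" using nq_weight_seq_pos[OF assms] .
  have S: "0 \<le> S" unfolding S_def
    by (rule suminf_nonneg[OF nq_weight_seq_summable[OF assms]]) (simp add: hpos less_imp_le)
  have "regularize h k \<le> (S + 1) * h k" for k
  proof (cases "k = 0")
    case True
    have "1 * 1 \<le> (S + 1) * h 0" using nq_weight_seq_ge_1[OF assms, of 0] S by (intro mult_mono) auto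
    thus ?thesis using True by (simp add: regularize_def)
  next
    case False
    have "real k * quotient_envelope h k \<le> real k * (h k / real k)"
      using False by (intro mult_left_mono quotient_envelope_le[OF hpos]) auto
    hence "real k * quotient_envelope h k \<le> h k" using False by simp
    moreover have "real k \<le> S * h k" using nq_weight_seq_linear_bound[OF assms] unfolding S_def .
    ultimately show ?thesis
      using False hpos[of k] quotient_envelope_nonneg[of h k, OF hpos]
      by (simp add: regularize_def max_def algebra_simps)
  qed
  thus ?thesis unfolding seq_lesssim_def using S by (intro exI[of _ "S + 1"]) auto
qed

lemma regularize_lesssim:
  assumes "seq_lesssim f h" "\<And>l. 0 < f l"
  shows "seq_lesssim (regularize f) (regularize h)"
proof -
  obtain A where A: "0 < A" "\<And>l. f l \<le> A * h l"
    using assms(1) unfolding seq_lesssim_def by blast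
  have hpos: "0 < h l" for l using assms(2)[of l] A(2)[of l] A(1) by (rule pos_of_le_pos_mult)
  have "regularize f k \<le> max 1 A * regularize h k" for k
  proof (cases "k = 0")
    case False
    have "quotient_envelope f k \<le> A * quotient_envelope h k"
      by (rule quotient_envelope_le_scaled[OF assms(2) A(2,1)])
    also have "\<dots> \<le> max 1 A * max 1 (quotient_envelope h k)"
      using quotient_envelope_nonneg[of h k, OF hpos] A by (intro mult_mono) auto
    finally have "max 1 (quotient_envelope f k) \<le> max 1 A * max 1 (quotient_envelope h k)"
      by (simp add: le_max_iff_disj mult_ge1_I)
    hence "real k * max 1 (quotient_envelope f k) \<le> real k * (max 1 A * max 1 (quotient_envelope h k))"
      by (intro mult_left_mono) auto
    thus ?thesis using False by (simp add: regularize_def mult.left_commute)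
  qed (simp add: regularize_def)
  thus ?thesis unfolding seq_lesssim_def by (intro exI[of _ "max 1 A"]) auto
qed

text \<open>Short ranges l < 2k are handled by the monotonicity of h; for l \<ge> 2k, the at least l/2
  terms 1/h j with k \<le> j \<le> l, each \<ge> 1/h l, make l/(2 h l) a lower bound for the tail.\<close>
lemma quotient_le_of_tail_bound:
  assumes f: "nq_weight_seq f" and h: "nq_weight_seq h"
    and A: "\<And>l. f l \<le> A * h l" "0 < A" and C: "0 < C"
    and tail: "tail_sum h k \<le> C * (real k / f k)" and kl: "1 \<le> k" "k \<le> l"
  shows "f k / real k \<le> (2 * A + 2 * C) * (h l / real l)"
proof -
  have fk: "0 < f k" and hl: "0 < h l" using nq_weight_seq_pos f h by auto
  have q: "0 \<le> h l / real l" using hl by simp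
  have "2 * A * (h l / real l) \<le> (2 * A + 2 * C) * (h l / real l)"
    by (rule mult_right_mono) (use q C in auto)
  moreover have "2 * C * (h l / real l) \<le> (2 * A + 2 * C) * (h l / real l)"
    by (rule mult_right_mono) (use q A(2) in auto)
  moreover consider "l < 2 * k" | "2 * k \<le> l" by linarith
  hence "f k / real k \<le> 2 * A * (h l / real l) \<or> f k / real k \<le> 2 * C * (h l / real l)"
  proof cases
    case 1
    have "f k \<le> A * h l"
      using A(1)[of k] mult_left_mono[OF nq_weight_seq_mono[OF h kl(2)] less_imp_le[OF A(2)]]
      by linarith
    moreover have "real l \<le> 2 * real k" using 1 by simp
    ultimately have "f k * real l \<le> A * h l * (2 * real k)"
      using fk A(2) hl by (intro mult_mono) auto
    hence "f k / real k \<le> 2 * A * (h l / real l)" using kl hl by (simp add: field_simps)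
    thus ?thesis ..
  next
    case 2
    have "real l / 2 / h l \<le> real (l - k + 1) / h l"
      using 2 hl by (intro divide_right_mono) auto
    also have "\<dots> \<le> C * (real k / f k)" using tail_sum_ge[OF h kl(2)] tail by linarith
    finally have "f k / real k \<le> 2 * C * (h l / real l)" using fk hl kl by (simp add: field_simps)
    thus ?thesis ..
  qed
  ultimately show ?thesis by linarith
qed

lemma lesssim_regularize_of_tail_bounded:
  assumes f: "nq_weight_seq f" and h: "nq_weight_seq h"
    and "seq_lesssim f h" "tail_bounded h f"
  shows "seq_lesssim f (regularize h)"
proof -
  obtain A where A: "0 < A" "\<And>l. f l \<le> A * h l"
    using assms(3) unfolding seq_lesssim_def by blast
  obtain C where C: "0 < C" "\<And>k. k \<ge> 1 \<Longrightarrow> tail_sum h k \<le> C * (real k / f k)"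
    using assms(4) unfolding tail_bounded_def by blast
  define B where "B = 2 * A + 2 * C + 1"
  have B: "1 \<le> B" using A C unfolding B_def by simp
  hence Bpos: "0 < B" by simp
  have "f k \<le> B * regularize h k" for k
  proof (cases "k = 0")
    case True thus ?thesis using f B unfolding nq_weight_seq_def weight_seq_def regularize_def by simp
  next
    case False
    have "f k / real k / B \<le> quotient_envelope h k"
    proof (rule quotient_envelope_greatest)
      fix l assume "max 1 k \<le> l"
      hence "f k / real k \<le> (2 * A + 2 * C) * (h l / real l)"
        using False by (intro quotient_le_of_tail_bound[OF f h A(2,1) C(1) C(2)]) auto
      also have "\<dots> \<le> B * (h l / real l)"
        unfolding B_def using nq_weight_seq_pos[OF h, of l] by (intro mult_right_mono) auto
      finally show "f k / real k / B \<le> h l / real l"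
        unfolding pos_divide_le_eq[OF Bpos] by (simp only: mult.commute)
    qed
    hence "f k \<le> B * (real k * quotient_envelope h k)" using B False by (simp add: field_simps)
    also have "\<dots> \<le> B * regularize h k"
      using B False by (intro mult_left_mono) (auto simp: regularize_def)
    finally show ?thesis .
  qed
  thus ?thesis unfolding seq_lesssim_def using B by (intro exI[of _ B]) auto
qed

primrec running_max :: "(real \<Rightarrow> real) \<Rightarrow> nat \<Rightarrow> real" where
  "running_max Y 0 = 1"
| "running_max Y (Suc n) = max (running_max Y n) (max (real (Suc n)) (Y (real (Suc n))))"

lemma running_max_mono: "mono (running_max Y)"
  by (rule incseq_SucI) simp

lemma running_max_ge_1: "1 \<le> running_max Y n"
  by (induction n) auto

lemma running_max_ge: "real n \<le> running_max Y n"
  by (cases n) auto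

lemma running_max_ge_fun: "1 \<le> n \<Longrightarrow> Y (real n) \<le> running_max Y n"
  by (cases n) auto

locale nq_weight_family =
  fixes mu :: "real \<Rightarrow> nat \<Rightarrow> real"
  assumes nq_weight_seq_mu: "0 < x \<Longrightarrow> nq_weight_seq (mu x)"
    and lesssim_mu: "0 < x \<Longrightarrow> x \<le> y \<Longrightarrow> seq_lesssim (mu x) (mu y)"
    and tail_bounded_mu: "0 < x \<Longrightarrow> \<exists>y>0. tail_bounded (mu y) (mu x)"
begin

lemma mu_pos: "0 < x \<Longrightarrow> 0 < mu x l"
  by (rule nq_weight_seq_pos[OF nq_weight_seq_mu])

lemma tail_bounded_mu_mono:
  assumes "tail_bounded (mu z) (mu x)" "0 < z" "z \<le> z'" "0 < x'" "x' \<le> x"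
  shows "tail_bounded (mu z') (mu x')"
proof (rule tail_bounded_lesssim_right[OF tail_bounded_lesssim_left])
  show "seq_lesssim (mu z) (mu z')" "seq_lesssim (mu x') (mu x)"
    using assms by (auto intro: lesssim_mu)
qed (use assms in \<open>auto intro: nq_weight_seq_mu mu_pos\<close>)

definition tail_index :: "real \<Rightarrow> real" where
  "tail_index x = (SOME y. 0 < y \<and> tail_bounded (mu y) (mu x))"

lemma tail_index_bounded: "0 < x \<Longrightarrow> 0 < tail_index x \<and> tail_bounded (mu (tail_index x)) (mu x)"
  unfolding tail_index_def by (rule someI_ex) (rule tail_bounded_mu)

text \<open>Rounding up and taking running maxima makes the tail index increasing in x; this is what
  makes sigma increasing in x.\<close>
definition tail_scale :: "real \<Rightarrow> real" where
  "tail_scale x = running_max tail_index (nat \<lceil>x\<rceil>)"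

lemma tail_scale_ge_1: "1 \<le> tail_scale x"
  unfolding tail_scale_def by (rule running_max_ge_1)

lemma tail_scale_pos: "0 < tail_scale x"
  using tail_scale_ge_1[of x] by simp

lemma tail_scale_ge: "x \<le> tail_scale x"
  unfolding tail_scale_def by (rule order_trans[OF real_nat_ceiling_ge running_max_ge])

lemma tail_scale_mono: "x \<le> y \<Longrightarrow> tail_scale x \<le> tail_scale y"
  unfolding tail_scale_def by (intro monoD[OF running_max_mono] nat_mono ceiling_mono)

lemma tail_bounded_tail_scale:
  assumes "0 < x"
  shows "tail_bounded (mu (tail_scale x)) (mu x)"
proof -
  define n where "n = nat \<lceil>x\<rceil>"
  have n: "1 \<le> n" "x \<le> real n" using assms unfolding n_def by (linarith, simp add: of_nat_ceiling)
  have index: "0 < tail_index (real n)" "tail_bounded (mu (tail_index (real n))) (mu (real n))"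
    using tail_index_bounded[of "real n"] n(1) by auto
  have "tail_index (real n) \<le> tail_scale x"
    unfolding tail_scale_def n_def[symmetric] by (rule running_max_ge_fun[OF n(1)])
  thus ?thesis by (rule tail_bounded_mu_mono[OF index(2,1) _ assms n(2)])
qed

definition sigma :: "real \<Rightarrow> nat \<Rightarrow> real" where
  "sigma x = regularize (mu (tail_scale x))"

lemma sigma_pos: "0 < sigma x k"
  unfolding sigma_def by (rule regularize_pos)

lemma nq_weight_seq_mu_tail_scale: "nq_weight_seq (mu (tail_scale x))"
  by (rule nq_weight_seq_mu[OF tail_scale_pos])

lemma sigma_lesssim_mu_tail_scale: "seq_lesssim (sigma x) (mu (tail_scale x))"
  unfolding sigma_def by (rule regularize_lesssim_self[OF nq_weight_seq_mu_tail_scale])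

lemma mu_lesssim_sigma: "0 < x \<Longrightarrow> seq_lesssim (mu x) (sigma x)"
  unfolding sigma_def
  by (intro lesssim_regularize_of_tail_bounded nq_weight_seq_mu nq_weight_seq_mu_tail_scale
      lesssim_mu tail_scale_ge tail_bounded_tail_scale)

lemma nq_weight_seq_sigma:
  assumes "0 < x"
  shows "nq_weight_seq (sigma x)"
  using nq_weight_seq_mu[OF assms] mu_lesssim_sigma[OF assms, unfolded sigma_def]
    nq_weight_seq_pos[OF nq_weight_seq_mu_tail_scale]
  unfolding sigma_def by (rule regularize_nq_weight_seq)

lemma sigma_quotient_at_top: "0 < x \<Longrightarrow> filterlim (\<lambda>k. sigma x k / real k) at_top sequentially"
  by (rule quotient_at_top_lesssim[OF mu_lesssim_sigma nq_weight_seq_quotient_at_top[OF nq_weight_seq_mu]])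

lemma sigma_lesssim_mono: "0 < x \<Longrightarrow> x \<le> y \<Longrightarrow> seq_lesssim (sigma x) (sigma y)"
  unfolding sigma_def
  by (intro regularize_lesssim lesssim_mu tail_scale_mono tail_scale_pos
      nq_weight_seq_pos[OF nq_weight_seq_mu_tail_scale])

lemma sigma_quotient_ge_1: "1 \<le> k \<Longrightarrow> 1 \<le> sigma x k / real k"
  unfolding sigma_def by (rule regularize_quotient_ge_1)

lemma sigma_quotient_mono: "1 \<le> k \<Longrightarrow> k \<le> l \<Longrightarrow> sigma x k / real k \<le> sigma x l / real l"
  unfolding sigma_def by (rule regularize_quotient_mono[OF nq_weight_seq_pos[OF nq_weight_seq_mu_tail_scale]])

lemma tail_bounded_sigma:
  assumes "0 < x"
  shows "tail_bounded (sigma (tail_scale (tail_scale x))) (sigma x)"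
proof -
  have "tail_bounded (sigma (tail_scale (tail_scale x))) (mu (tail_scale x))"
    by (rule tail_bounded_lesssim_left[OF tail_bounded_tail_scale mu_lesssim_sigma
          nq_weight_seq_mu_tail_scale nq_weight_seq_sigma]; rule tail_scale_pos)
  thus ?thesis by (rule tail_bounded_lesssim_right[OF _ sigma_lesssim_mu_tail_scale sigma_pos])
qed

end

theorem lemma5p14:
  fixes mu :: "real \<Rightarrow> nat \<Rightarrow> real"
  assumes wmu: "\<And>x. x > 0 \<Longrightarrow> nq_weight_seq (mu x)"
    and monomu: "\<And>x y. 0 < x \<Longrightarrow> x \<le> y \<Longrightarrow> seq_lesssim (mu x) (mu y)"
    and tailmu: "\<forall>x>0. \<exists>y>0. \<exists>C>0. \<forall>k\<ge>1. tail_sum (mu y) k \<le> C * (real k / mu x k)"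
  shows "\<exists>sigma :: real \<Rightarrow> nat \<Rightarrow> real.
    (\<forall>x>0. nq_weight_seq (sigma x)) \<and>
    (\<forall>x>0. (\<forall>k\<ge>1. sigma x k / real k \<ge> 1)
          \<and> (\<forall>k\<ge>1. \<forall>l\<ge>k. sigma x k / real k \<le> sigma x l / real l)
          \<and> filterlim (\<lambda>k. sigma x k / real k) at_top sequentially) \<and>
    (\<forall>x y. 0 < x \<and> x \<le> y \<longrightarrow> seq_lesssim (sigma x) (sigma y)) \<and>
    (\<forall>x>0. \<exists>y>0. \<exists>C>0. \<forall>k\<ge>1. tail_sum (sigma y) k \<le> C * (real k / sigma x k)) \<and>
    (\<forall>x>0. \<exists>y>0. seq_lesssim (sigma x) (mu y)) \<and>
    (\<forall>x>0. \<exists>y>0. seq_lesssim (mu x) (sigma y))"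
proof -
  interpret nq_weight_family mu
    using wmu monomu tailmu by unfold_locales (auto simp: tail_bounded_def)
  have "\<forall>x>0. \<exists>y>0. tail_bounded (sigma y) (sigma x)"
    using tail_bounded_sigma tail_scale_pos by blast
  moreover have "\<forall>x>0. \<exists>y>0. seq_lesssim (sigma x) (mu y)"
    using sigma_lesssim_mu_tail_scale tail_scale_pos by blast
  moreover have "\<forall>x>0. \<exists>y>0. seq_lesssim (mu x) (sigma y)"
    using mu_lesssim_sigma by blast
  ultimately show ?thesis
    unfolding tail_bounded_def
    using nq_weight_seq_sigma sigma_quotient_ge_1 sigma_quotient_mono sigma_quotient_at_top
      sigma_lesssim_mono
    by (intro exI[of _ sigma]) auto
qed

end
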